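(* Let $P(\lambda)=\sum_{j=0}^m A_j\lambda^j$ be an $n\times n$ complex matrix polynomial, $\mu_1\neq\mu_2$ complex numbers, $\varepsilon>0$ and $w=\{\omega_0,\dots,\omega_m\}$ nonnegative weights with $\omega_0>0$. Suppose $Q(\lambda)=P(\lambda)+\Delta(\lambda)\in\mathcal{B}(P,\varepsilon,w)$, where $\Delta(\lambda)=\sum_{j=0}^m\Delta_j\lambda^j$, and that $\mu_1,\mu_2$ are eigenvalues of $Q$. Then for every $\gamma\neq0$, $$\varepsilon\ \ge\ \frac{\|F[\Delta(\mu_1,\mu_2);\gamma]\|}{\left\|\begin{bmatrix} w(|\mu_1|) & 0\\ \gamma\,|w[\mu_1,\mu_2]| & w(|\mu_2|)\end{bmatrix}\right\|}\ \ge\ \frac{s_{2n-1}(F[P(\mu_1,\mu_2);\gamma])}{\left\|\begin{bmatrix} w(|\mu_1|) & 0\\ \gamma\,|w[\mu_1,\mu_2]| & w(|\mu_2|)\end{bmatrix}\right\|}.$$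
   Context: $\mathcal{B}(P,\varepsilon,w)$ is the set of matrix polynomials $\sum_{j=0}^m(A_j+\Delta_j)\lambda^j$ with $\Delta_j\in\mathbb{C}^{n\times n}$ and $\|\Delta_j\|\le\varepsilon\omega_j$ for $j=0,\dots,m$ ($\|\cdot\|$ the spectral norm). $w(\lambda)=\sum_{j=0}^m\omega_j\lambda^j$, and $|w[\mu_1,\mu_2]|$ denotes $\sum_{j=0}^m\omega_j\frac{|\mu_1^j-\mu_2^j|}{|\mu_1-\mu_2|}$. For a matrix polynomial $R$, $R[\mu_1,\mu_2]=\frac{R(\mu_1)-R(\mu_2)}{\mu_1-\mu_2}$ and $F[R(\mu_1,\mu_2);\gamma]=\begin{bmatrix} R(\mu_1) & 0\\ \gamma R[\mu_1,\mu_2] & R(\mu_2)\end{bmatrix}$. Singular values are ordered $s_1\ge\dots\ge s_{2n}$, so $s_{2n-1}$ is the second smallest. *)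

theory Defs
  imports "HOL-Analysis.Analysis" "HOL-Computational_Algebra.Polynomial"
begin

text \<open>Square complex matrices of a fixed size are represented by
  complex^'k^'k (the size is the cardinality of the finite index type 'k).\<close>

definition specnorm :: "complex^'k^'k \<Rightarrow> real" where
  "specnorm M = onorm (\<lambda>x. M *v x)"

definition mpeval :: "(nat \<Rightarrow> complex^'n^'n) \<Rightarrow> nat \<Rightarrow> complex \<Rightarrow> complex^'n^'n" where
  "mpeval A m z = (\<chi> i k. \<Sum>j\<le>m. z ^ j * (A j $ i $ k))"

definition mpdiv :: "(nat \<Rightarrow> complex^'n^'n) \<Rightarrow> nat \<Rightarrow> complex \<Rightarrow> complex \<Rightarrow> complex^'n^'n" where
  "mpdiv A m z1 z2 = (\<chi> i k. (mpeval A m z1 $ i $ k - mpeval A m z2 $ i $ k) / (z1 - z2))"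

definition blockmat :: "complex^'n^'n \<Rightarrow> complex^'n^'n \<Rightarrow> complex^'n^'n \<Rightarrow> complex^'n^'n
    \<Rightarrow> complex^('n + 'n)^('n + 'n)" where
  "blockmat X Y Z W = (\<chi> i j. case (i, j) of
      (Inl a, Inl b) \<Rightarrow> X $ a $ b
    | (Inl a, Inr b) \<Rightarrow> Y $ a $ b
    | (Inr a, Inl b) \<Rightarrow> Z $ a $ b
    | (Inr a, Inr b) \<Rightarrow> W $ a $ b)"

definition Fmat :: "(nat \<Rightarrow> complex^'n^'n) \<Rightarrow> nat \<Rightarrow> complex \<Rightarrow> complex \<Rightarrow> complex
    \<Rightarrow> complex^('n + 'n)^('n + 'n)" where
  "Fmat A m z1 z2 \<gamma> = blockmat (mpeval A m z1) 0
      (\<chi> i k. \<gamma> * (mpdiv A m z1 z2 $ i $ k)) (mpeval A m z2)"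

definition adjoint_mat :: "complex^'k^'k \<Rightarrow> complex^'k^'k" where
  "adjoint_mat M = (\<chi> i j. cnj (M $ j $ i))"

definition charpoly :: "complex^'k^'k \<Rightarrow> complex poly" where
  "charpoly M = det (\<chi> i j. (if i = j then [:0, 1:] else 0) - [:M $ i $ j:])"

definition eig_count_ge :: "complex^'k^'k \<Rightarrow> real \<Rightarrow> nat" where
  "eig_count_ge M t =
     (\<Sum>z\<in>{z. poly (charpoly M) z = 0 \<and> Im z = 0 \<and> t \<le> Re z}. order z (charpoly M))"

text \<open>k-th largest singular value s_k(A) (k = 1..CARD('k)): square root of the
  k-th largest eigenvalue (with multiplicity) of A^* A.\<close>
definition sval :: "nat \<Rightarrow> complex^'k^'k \<Rightarrow> real" where
  "sval k A = sqrt (Sup {t. 0 \<le> t \<and> k \<le> eig_count_ge (adjoint_mat A ** A) t})"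

definition wmat :: "(nat \<Rightarrow> real) \<Rightarrow> nat \<Rightarrow> complex \<Rightarrow> complex \<Rightarrow> complex \<Rightarrow> complex^2^2" where
  "wmat \<omega> m z1 z2 \<gamma> = (let
      a = (\<Sum>j\<le>m. \<omega> j * cmod z1 ^ j);
      d = (\<Sum>j\<le>m. \<omega> j * cmod z2 ^ j);
      c = (\<Sum>j\<le>m. \<omega> j * cmod (z1 ^ j - z2 ^ j) / cmod (z1 - z2))
    in (\<chi> i k. if i = 1 \<and> k = 1 then complex_of_real a
              else if i = 2 \<and> k = 1 then \<gamma> * complex_of_real c
              else if i = 2 \<and> k = 2 then complex_of_real d else 0))"

end

theory Submission
  imports Defs
begin

text \<open>
  The first inequality is a norm estimate: on a block vector \<open>(p, q)\<close> the two blocks of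
  \<open>F[\<Delta>(\<mu>\<^sub>1,\<mu>\<^sub>2);\<gamma>] (p, q)\<close> are bounded by \<open>\<epsilon>\<close> times the entries of the weight matrix
  applied to \<open>(\<parallel>p\<parallel>, \<parallel>q\<parallel>)\<close>, suitably rotated by the phase of \<open>\<gamma>\<close>.

  For the second, pick \<open>u \<in> ker Q(\<mu>\<^sub>1)\<close> and \<open>v \<in> ker Q(\<mu>\<^sub>2)\<close>. Then \<open>F[Q(\<mu>\<^sub>1,\<mu>\<^sub>2);\<gamma>]\<close>
  annihilates the two-dimensional space spanned by \<open>(0, v)\<close> and \<open>(u, \<gamma> u / (\<mu>\<^sub>1 - \<mu>\<^sub>2))\<close>,
  so there \<open>F[P] = -F[\<Delta>]\<close> has norm at most \<open>\<parallel>F[\<Delta>]\<parallel>\<close>. By the Courant-Fischer principle,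
  applied to the Hermitian matrix \<open>F[P]\<^sup>* F[P]\<close>, a two-dimensional subspace on which a matrix
  has norm at most \<open>s\<close> forces its second smallest singular value to be at most \<open>s\<close>.
\<close>

definition cinner :: "complex^'k \<Rightarrow> complex^'k \<Rightarrow> complex" where
  "cinner x y = (\<Sum>i\<in>UNIV. cnj (x$i) * y$i)"

lemma cinner_add_right: "cinner x (y + z) = cinner x y + cinner x z"
  by (simp add: cinner_def distrib_left sum.distrib)

lemma cinner_add_left: "cinner (x + y) z = cinner x z + cinner y z"
  by (simp add: cinner_def distrib_right sum.distrib)

lemma cinner_diff_right: "cinner x (y - z) = cinner x y - cinner x z"
  by (simp add: cinner_def right_diff_distrib sum_subtractf)

lemma cinner_scalar_right: "cinner x (c *s y) = c * cinner x y"
  by (simp add: cinner_def sum_distrib_left algebra_simps)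

lemma cinner_scalar_left: "cinner (c *s x) y = cnj c * cinner x y"
  by (simp add: cinner_def sum_distrib_left algebra_simps)

lemma cnj_cinner: "cnj (cinner x y) = cinner y x"
  by (simp add: cinner_def mult.commute)

lemma norm_power2_vec: "(norm (x::complex^'k))^2 = (\<Sum>i\<in>UNIV. (cmod (x$i))^2)"
  by (simp add: norm_vec_def L2_set_def sum_nonneg)

lemma cinner_self: "cinner x x = complex_of_real ((norm x)^2)"
proof -
  have "cnj (x$i) * x$i = complex_of_real ((cmod (x$i))^2)" for i
    by (metis complex_norm_square mult.commute of_real_power)
  thus ?thesis by (simp add: norm_power2_vec cinner_def)
qed

lemma scalar_mult_vec_eq_0_iff: "c *s x = 0 \<longleftrightarrow> c = 0 \<or> x = (0::'a::idom^'k)"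
  by (auto simp: vec_eq_iff)

lemma norm_scalar_mult_vec: "norm (c *s (x::complex^'k)) = cmod c * norm x"
proof -
  have "(norm (c *s x))^2 = (cmod c * norm x)^2"
    by (simp add: norm_power2_vec power_mult_distrib norm_mult sum_distrib_left)
  thus ?thesis by (simp add: power2_eq_iff_nonneg)
qed

lemma adjoint_mat_adjoint_mat [simp]: "adjoint_mat (adjoint_mat A) = A"
  by (simp add: adjoint_mat_def vec_eq_iff)

lemma adjoint_mat_matrix_mult: "adjoint_mat (A ** B) = adjoint_mat B ** adjoint_mat A"
  by (simp add: adjoint_mat_def vec_eq_iff matrix_matrix_mult_def mult.commute)

lemma cinner_adjoint_left: "cinner (A *v x) y = cinner x (adjoint_mat A *v y)"
proof -
  have "cinner (A *v x) y = (\<Sum>i\<in>UNIV. \<Sum>k\<in>UNIV. cnj (A$i$k) * cnj (x$k) * y$i)"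
    by (simp add: cinner_def matrix_vector_mult_def sum_distrib_left sum_distrib_right mult_ac)
  also have "\<dots> = (\<Sum>k\<in>UNIV. \<Sum>i\<in>UNIV. cnj (A$i$k) * cnj (x$k) * y$i)"
    by (rule sum.swap)
  also have "\<dots> = cinner x (adjoint_mat A *v y)"
    by (simp add: cinner_def matrix_vector_mult_def adjoint_mat_def sum_distrib_left
        sum_distrib_right mult_ac)
  finally show ?thesis .
qed

lemma cinner_adjoint_right: "cinner x (A *v y) = cinner (adjoint_mat A *v x) y"
  using cinner_adjoint_left[of "adjoint_mat A" x y] by simp

lemma specnorm_bound: "norm (A *v x) \<le> specnorm A * norm x"
  unfolding specnorm_def by (rule onorm[OF matrix_vector_mul_bounded_linear])

lemma specnorm_nonneg: "0 \<le> specnorm A"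
  unfolding specnorm_def by (rule onorm_pos_le[OF matrix_vector_mul_bounded_linear])

lemma specnorm_le: "(\<And>x. norm (A *v x) \<le> b * norm x) \<Longrightarrow> specnorm A \<le> b"
  unfolding specnorm_def by (rule onorm_le)

section \<open>The spectral theorem for Hermitian matrices\<close>

lemma kernel_nonzero_if_det_eq_0:
  fixes M :: "'a::field^'n^'n"
  assumes "det M = 0"
  obtains u where "u \<noteq> 0" "M *v u = 0"
proof -
  have "\<not> (\<exists>B. B ** M = mat 1)"
    using assms invertible_det_nz invertible_left_inverse by blast
  thus ?thesis using matrix_left_invertible_ker that by blast
qed

lemma exists_nonzero_orthogonal:
  fixes u :: "'k \<Rightarrow> complex^'k"
  assumes "j \<notin> I"
  obtains y where "y \<noteq> 0" "\<And>i. i \<in> I \<Longrightarrow> cinner (u i) y = 0"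
proof -
  define R :: "complex^'k^'k" where "R = (\<chi> r c. if r \<in> I then cnj (u r $ c) else 0)"
  have "row j R = 0" using assms by (simp add: R_def row_def vec_eq_iff)
  then obtain y where y: "y \<noteq> 0" "R *v y = 0"
    using kernel_nonzero_if_det_eq_0[OF det_zero_row(2)] by blast
  have "cinner (u i) y = (R *v y)$i" if "i \<in> I" for i
    using that by (simp add: R_def cinner_def matrix_vector_mult_def)
  with y show ?thesis by (intro that) auto
qed

lemma hermitian_cinner_real:
  assumes "adjoint_mat H = H"
  shows "cinner x (H *v x) = complex_of_real (Re (cinner x (H *v x)))"
proof -
  have "cnj (cinner x (H *v x)) = cinner x (H *v x)"
    by (metis cinner_adjoint_right assms cnj_cinner)
  thus ?thesis by (metis Reals_cnj_iff complex_is_Real_iff of_real_Re)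
qed

lemma le_0_if_le_all_pos_multiples:
  fixes x c :: real
  assumes "\<And>e. 0 < e \<Longrightarrow> x \<le> e * c"
  shows "x \<le> 0"
proof (rule ccontr)
  assume "\<not> x \<le> 0"
  define e where "e = x / (\<bar>c\<bar> + 1)"
  have "0 < e" using \<open>\<not> x \<le> 0\<close> by (simp add: e_def)
  have "e * c \<le> e * \<bar>c\<bar>" using \<open>0 < e\<close> by (simp add: mult_left_mono)
  also have "\<dots> < e * (\<bar>c\<bar> + 1)" using \<open>0 < e\<close> by simp
  also have "\<dots> = x" by (simp add: e_def)
  finally show False using assms[OF \<open>0 < e\<close>] by simp
qed

text \<open>
  A maximiser of the Rayleigh quotient on an \<open>H\<close>-invariant subspace is an eigenvector: a
  nonzero residual \<open>z = H x\<^sub>0 - l x\<^sub>0\<close> (orthogonal to \<open>x\<^sub>0\<close>) would raise the quotient at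
  \<open>x\<^sub>0 + e z\<close> for small \<open>e > 0\<close>, as it grows there by \<open>2 e \<parallel>z\<parallel>\<^sup>2 + O(e\<^sup>2)\<close>.
\<close>
lemma hermitian_rayleigh_maximiser_eigenvector:
  fixes H :: "complex^'k^'k"
  assumes herm: "adjoint_mat H = H"
    and S_add: "\<And>x y. x \<in> S \<Longrightarrow> y \<in> S \<Longrightarrow> x + y \<in> S"
    and S_scalar: "\<And>c x. x \<in> S \<Longrightarrow> c *s x \<in> S"
    and S_invariant: "\<And>x. x \<in> S \<Longrightarrow> H *v x \<in> S"
    and x0: "x0 \<in> S" "norm x0 = 1"
    and max: "\<And>y. y \<in> S \<Longrightarrow> Re (cinner y (H *v y)) \<le> l * (norm y)^2"
    and l: "l = Re (cinner x0 (H *v x0))"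
  shows "H *v x0 = of_real l *s x0"
proof -
  have Hx0: "cinner x0 (H *v x0) = of_real l"
    using hermitian_cinner_real[OF herm] l by simp
  have x0x0: "cinner x0 x0 = 1" using x0 by (simp add: cinner_self)
  define z where "z = H *v x0 - of_real l *s x0"
  have zS: "z \<in> S"
    using S_add[OF S_invariant[OF x0(1)] S_scalar[OF x0(1), of "- of_real l"]]
    by (simp add: z_def)
  have x0z: "cinner x0 z = 0"
    by (simp add: z_def cinner_diff_right cinner_scalar_right Hx0 x0x0)
  hence zx0: "cinner z x0 = 0" using cnj_cinner[of x0 z] by simp
  have Hx0_split: "H *v x0 = z + of_real l *s x0" by (simp add: z_def)
  have zHx0: "cinner z (H *v x0) = cinner z z"
    by (simp add: Hx0_split cinner_add_right cinner_scalar_right zx0)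
  have x0Hz: "cinner x0 (H *v z) = cinner z z"
    using cinner_adjoint_right[of x0 H z] herm
    by (simp add: Hx0_split cinner_add_left cinner_scalar_left x0z)
  define N where "N = (norm z)^2"
  define C where "C = Re (cinner z (H *v z))"
  have zz: "cinner z z = of_real N" by (simp add: N_def cinner_self)
  have growth: "2 * N \<le> e * (l * N - C)" if e: "e > 0" for e
  proof -
    define w where "w = x0 + of_real e *s z"
    have "w \<in> S" unfolding w_def by (intro S_add S_scalar x0 zS)
    hence "Re (cinner w (H *v w)) \<le> l * (norm w)^2" by (rule max)
    moreover have "Re (cinner w (H *v w)) = l + 2 * e * N + e^2 * C"
      by (simp add: w_def matrix_vector_right_distrib vector_scalar_commute cinner_add_left
          cinner_add_right cinner_scalar_left cinner_scalar_right Hx0 x0Hz zHx0 zz C_def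
          power2_eq_square algebra_simps)
    moreover have "(norm w)^2 = 1 + e^2 * N"
    proof -
      have "cinner w w = of_real (1 + e^2 * N)"
        by (simp add: w_def cinner_add_left cinner_add_right cinner_scalar_left
            cinner_scalar_right x0x0 x0z zx0 zz power2_eq_square)
      thus ?thesis by (simp only: cinner_self of_real_eq_iff)
    qed
    ultimately have "e * (2 * N) \<le> e * (e * (l * N - C))"
      by (simp add: algebra_simps power2_eq_square)
    thus ?thesis using e by simp
  qed
  have "2 * N \<le> 0" by (rule le_0_if_le_all_pos_multiples) (rule growth)
  hence "z = 0" by (simp add: N_def)
  thus ?thesis by (simp add: z_def)
qed

lemma rayleigh_quotient_attains_max:
  fixes H :: "complex^'k^'k"
  assumes "closed S" and S_scalar: "\<And>c x. x \<in> S \<Longrightarrow> c *s x \<in> S" and "y \<in> S" "y \<noteq> 0"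
  obtains x0 where "x0 \<in> S" "norm x0 = 1"
    "\<And>y. y \<in> S \<Longrightarrow> Re (cinner y (H *v y)) \<le> Re (cinner x0 (H *v x0)) * (norm y)^2"
proof -
  define f where "f = (\<lambda>x. Re (cinner x (H *v x)))"
  have normalize: "of_real (1 / norm y) *s y \<in> S \<inter> sphere 0 1" if "y \<in> S" "y \<noteq> 0" for y
    using that by (simp add: S_scalar norm_scalar_mult_vec norm_divide)
  have "compact (S \<inter> sphere 0 1)"
    using \<open>closed S\<close> by (simp add: compact_eq_bounded_closed closed_Int bounded_Int)
  moreover have "S \<inter> sphere 0 1 \<noteq> {}" using normalize[OF \<open>y \<in> S\<close> \<open>y \<noteq> 0\<close>] by blast
  moreover have "continuous_on (S \<inter> sphere 0 1) f"
    unfolding f_def cinner_def matrix_vector_mult_def by (intro continuous_intros)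
  ultimately obtain x0 where x0: "x0 \<in> S" "norm x0 = 1"
    and x0_max: "\<And>y. y \<in> S \<inter> sphere 0 1 \<Longrightarrow> f y \<le> f x0"
    using continuous_attains_sup by (metis IntD1 IntD2 mem_sphere_0)
  have "f y \<le> f x0 * (norm y)^2" if "y \<in> S" for y
  proof (cases "y = 0")
    case False
    have "f (of_real (1 / norm y) *s y) = f y / (norm y)^2"
      by (simp add: f_def vector_scalar_commute cinner_scalar_left cinner_scalar_right
          power2_eq_square)
    thus ?thesis using x0_max[OF normalize[OF that False]] False by (simp add: divide_le_eq)
  qed (simp add: f_def cinner_def)
  thus ?thesis using that x0 by (simp add: f_def)
qed

lemma hermitian_eigenvector_orthogonal:
  fixes H :: "complex^'k^'k" and u :: "'k \<Rightarrow> complex^'k"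
  assumes herm: "adjoint_mat H = H"
    and eigen: "\<And>i. i \<in> I \<Longrightarrow> H *v u i = of_real (l i) *s u i" and "j \<notin> I"
  obtains x l0 where "norm x = 1" "\<And>i. i \<in> I \<Longrightarrow> cinner (u i) x = 0"
    "H *v x = of_real l0 *s x"
proof -
  define S where "S = {x. \<forall>i\<in>I. cinner (u i) x = 0}"
  have S_scalar: "c *s x \<in> S" if "x \<in> S" for c x
    using that by (simp add: S_def cinner_scalar_right)
  have S_add: "x + y \<in> S" if "x \<in> S" "y \<in> S" for x y
    using that by (simp add: S_def cinner_add_right)
  have S_invariant: "H *v x \<in> S" if "x \<in> S" for x
  proof -
    have "cinner (u i) (H *v x) = cnj (of_real (l i)) * cinner (u i) x" if "i \<in> I" for i
      using cinner_adjoint_right[of "u i" H x] herm eigen[OF that]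
      by (simp add: cinner_scalar_left)
    with \<open>x \<in> S\<close> show ?thesis by (simp add: S_def)
  qed
  have "closed {x. cinner (u i) x = 0}" for i
    unfolding cinner_def by (intro closed_Collect_eq continuous_intros)
  moreover have "S = (\<Inter>i\<in>I. {x. cinner (u i) x = 0})" by (auto simp: S_def)
  ultimately have "closed S" by auto
  obtain y where "y \<noteq> 0" "\<And>i. i \<in> I \<Longrightarrow> cinner (u i) y = 0"
    using exists_nonzero_orthogonal[OF \<open>j \<notin> I\<close>] by blast
  hence "y \<in> S" by (simp add: S_def)
  obtain x0 where x0: "x0 \<in> S" "norm x0 = 1"
    and "\<And>y. y \<in> S \<Longrightarrow> Re (cinner y (H *v y)) \<le> Re (cinner x0 (H *v x0)) * (norm y)^2"
    using rayleigh_quotient_attains_max[where H = H, OF \<open>closed S\<close> S_scalar \<open>y \<in> S\<close> \<open>y \<noteq> 0\<close>]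
    by blast
  hence "H *v x0 = of_real (Re (cinner x0 (H *v x0))) *s x0"
    using hermitian_rayleigh_maximiser_eigenvector[OF herm S_add S_scalar S_invariant x0] by blast
  thus ?thesis using that x0 by (auto simp: S_def)
qed

lemma hermitian_orthonormal_eigenvectors_on:
  fixes H :: "complex^'k^'k" and I :: "'k set"
  assumes herm: "adjoint_mat H = H" and "finite I"
  shows "\<exists>u l. (\<forall>i\<in>I. \<forall>j\<in>I. cinner (u i) (u j) = (if i = j then 1 else 0))
      \<and> (\<forall>i\<in>I. H *v u i = of_real (l i) *s u i)"
  using \<open>finite I\<close>
proof (induction I rule: finite_induct)
  case (insert j I)
  then obtain u l where
    orthonormal: "\<forall>i\<in>I. \<forall>k\<in>I. cinner (u i) (u k) = (if i = k then 1 else 0)"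
    and eigen: "\<forall>i\<in>I. H *v u i = of_real (l i) *s u i" by blast
  obtain x l0 where x: "norm x = 1" "\<And>i. i \<in> I \<Longrightarrow> cinner (u i) x = 0"
    "H *v x = of_real l0 *s x"
    using hermitian_eigenvector_orthogonal[OF herm _ insert(2)] eigen by metis
  have "cinner x x = 1" using x(1) by (simp add: cinner_self)
  moreover have "cinner x (u i) = 0" if "i \<in> I" for i
    using x(2)[OF that] cnj_cinner by (metis complex_cnj_zero)
  ultimately have
    "\<forall>i\<in>insert j I. \<forall>k\<in>insert j I. cinner ((u(j := x)) i) ((u(j := x)) k) = (if i = k then 1 else 0)"
    using orthonormal x(2) insert(2) by auto
  moreover have "\<forall>i\<in>insert j I. H *v (u(j := x)) i = of_real ((l(j := l0)) i) *s (u(j := x)) i"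
    using eigen x(3) insert(2) by auto
  ultimately show ?case by blast
qed simp

lemma hermitian_orthonormal_eigenbasis:
  fixes H :: "complex^'k^'k"
  assumes "adjoint_mat H = H"
  obtains u :: "'k \<Rightarrow> complex^'k" and l
  where "\<And>i j. cinner (u i) (u j) = (if i = j then 1 else 0)"
    "\<And>i. H *v u i = of_real (l i) *s u i"
  using hermitian_orthonormal_eigenvectors_on[OF assms finite_class.finite_UNIV] by auto


section \<open>Courant-Fischer bound for singular values\<close>

definition column_matrix :: "('k \<Rightarrow> complex^'k) \<Rightarrow> complex^'k^'k" where
  "column_matrix u = (\<chi> r c. u c $ r)"

definition diagonal_matrix :: "('k \<Rightarrow> real) \<Rightarrow> complex^'k^'k" where
  "diagonal_matrix l = (\<chi> i j. if i = j then of_real (l i) else 0)"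

lemma column_matrix_unitary:
  assumes "\<And>i j. cinner (u i) (u j) = (if i = j then 1 else 0)"
  shows "adjoint_mat (column_matrix u) ** column_matrix u = mat 1"
    and "column_matrix u ** adjoint_mat (column_matrix u) = mat 1"
proof -
  show 1: "adjoint_mat (column_matrix u) ** column_matrix u = mat 1"
    using assms by (simp add: vec_eq_iff matrix_matrix_mult_def adjoint_mat_def column_matrix_def
        mat_def cinner_def)
  show "column_matrix u ** adjoint_mat (column_matrix u) = mat 1"
    using matrix_left_right_inverse 1 by blast
qed

lemma adjoint_column_matrix_mult_vec: "(adjoint_mat (column_matrix u) *v x) $ i = cinner (u i) x"
  by (simp add: matrix_vector_mult_def adjoint_mat_def column_matrix_def cinner_def)

lemma diagonal_matrix_mult_vec: "(diagonal_matrix l *v y) $ i = of_real (l i) * y $ i"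
  by (simp add: matrix_vector_mult_def diagonal_matrix_def if_distrib if_distribR cong: if_cong)

lemma eigenvectors_diagonalize:
  assumes "\<And>i. H *v u i = of_real (l i) *s u i"
  shows "H ** column_matrix u = column_matrix u ** diagonal_matrix l"
proof -
  have "(H ** column_matrix u) $ r $ c = (H *v u c) $ r" for r c
    by (simp add: matrix_matrix_mult_def matrix_vector_mult_def column_matrix_def)
  moreover have "(column_matrix u ** diagonal_matrix l) $ r $ c = of_real (l c) * u c $ r" for r c
    by (simp add: matrix_matrix_mult_def column_matrix_def diagonal_matrix_def if_distrib
        cong: if_cong)
  ultimately show ?thesis using assms by (simp add: vec_eq_iff)
qed

lemma unitary_cinner:
  assumes "adjoint_mat U ** U = mat 1"
  shows "cinner (U *v y) (U *v z) = cinner y z"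
  by (simp only: cinner_adjoint_left matrix_vector_mul_assoc assms matrix_vector_mul_lid)

lemma rayleigh_lower_bound:
  fixes u :: "'k \<Rightarrow> complex^'k" and H :: "complex^'k^'k"
  assumes orthonormal: "\<And>i j. cinner (u i) (u j) = (if i = j then 1 else 0)"
    and eigen: "\<And>i. H *v u i = of_real (l i) *s u i"
    and orth: "\<And>i. l i < t \<Longrightarrow> cinner (u i) x = 0"
  shows "t * (norm x)^2 \<le> Re (cinner x (H *v x))"
proof -
  let ?U = "column_matrix u"
  note unitary = column_matrix_unitary[OF orthonormal]
  define y where "y = adjoint_mat ?U *v x"
  have x_eq: "x = ?U *v y"
    by (simp add: y_def matrix_vector_mul_assoc unitary(2))
  have y_i: "y $ i = cinner (u i) x" for i
    by (simp add: y_def adjoint_column_matrix_mult_vec)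
  have "complex_of_real ((norm x)^2) = complex_of_real ((norm y)^2)"
    unfolding cinner_self[symmetric] by (subst (1 2) x_eq) (rule unitary_cinner[OF unitary(1)])
  hence norm_x: "(norm x)^2 = (\<Sum>i\<in>UNIV. (cmod (y$i))^2)"
    by (simp only: of_real_eq_iff norm_power2_vec)
  have "H *v x = ?U *v (diagonal_matrix l *v y)"
    by (subst x_eq) (simp add: matrix_vector_mul_assoc eigenvectors_diagonalize[OF eigen])
  hence "cinner x (H *v x) = cinner y (diagonal_matrix l *v y)"
    by (simp only:) (subst x_eq, rule unitary_cinner[OF unitary(1)])
  also have "\<dots> = (\<Sum>i\<in>UNIV. complex_of_real (l i * (cmod (y$i))^2))"
    unfolding cinner_def diagonal_matrix_mult_vec
    by (rule sum.cong[OF refl])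
      (metis complex_norm_square mult.commute mult.left_commute of_real_mult of_real_power)
  finally have quadratic_form: "Re (cinner x (H *v x)) = (\<Sum>i\<in>UNIV. l i * (cmod (y$i))^2)"
    by (simp add: Re_sum)
  have "t * (norm x)^2 = (\<Sum>i\<in>UNIV. t * (cmod (y$i))^2)"
    by (simp add: norm_x sum_distrib_left)
  also have "\<dots> \<le> (\<Sum>i\<in>UNIV. l i * (cmod (y$i))^2)"
  proof (rule sum_mono)
    fix i
    show "t * (cmod (y$i))^2 \<le> l i * (cmod (y$i))^2"
      by (cases "l i < t") (simp_all add: orth y_i mult_right_mono)
  qed
  finally show ?thesis using quadratic_form by simp
qed

lemma charpoly_eval: "poly (charpoly M) z = det (mat z - M)"
  unfolding charpoly_def det_def
  by (simp add: poly_sum poly_prod mat_def if_distrib if_distribR cong: if_cong)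

lemma mat_matrix_mult_commute: "mat z ** A = A ** (mat z :: 'a::comm_ring_1^'k^'k)"
  by (simp add: vec_eq_iff matrix_matrix_mult_def mat_def if_distribR if_distrib mult.commute
      cong: if_cong)

lemma matrix_diff_mult: "(A - B) ** C = A ** C - B ** (C :: 'a::ring_1^'k^'j)"
  by (simp add: matrix_matrix_mult_def vec_eq_iff left_diff_distrib sum_subtractf)

lemma matrix_mult_diff: "C ** (A - B) = C ** A - C ** (B :: 'a::ring_1^'k^'j)"
  by (simp add: matrix_matrix_mult_def vec_eq_iff right_diff_distrib sum_subtractf)

lemma charpoly_hermitian:
  fixes u :: "'k \<Rightarrow> complex^'k" and H :: "complex^'k^'k"
  assumes orthonormal: "\<And>i j. cinner (u i) (u j) = (if i = j then 1 else 0)"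
    and eigen: "\<And>i. H *v u i = of_real (l i) *s u i"
  shows "charpoly H = (\<Prod>i\<in>UNIV. [:- complex_of_real (l i), 1:])"
proof -
  let ?U = "column_matrix u"
  have "det (adjoint_mat ?U) * det ?U = 1"
    using column_matrix_unitary(1)[OF orthonormal] det_mul[of "adjoint_mat ?U" ?U] by simp
  hence det_U: "det ?U \<noteq> 0" by auto
  have "poly (charpoly H) z = poly (\<Prod>i\<in>UNIV. [:- complex_of_real (l i), 1:]) z" for z
  proof -
    have "(mat z - H) ** ?U = ?U ** (mat z - diagonal_matrix l)"
      by (simp add: matrix_diff_mult matrix_mult_diff mat_matrix_mult_commute
          eigenvectors_diagonalize[OF eigen])
    hence "det (mat z - H) * det ?U = det ?U * det (mat z - diagonal_matrix l)"
      by (metis det_mul)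
    hence "det (mat z - H) = det (mat z - diagonal_matrix l)" using det_U by simp
    also have "\<dots> = (\<Prod>i\<in>UNIV. z - complex_of_real (l i))"
      by (subst det_diagonal) (simp_all add: mat_def diagonal_matrix_def)
    finally show ?thesis by (simp add: charpoly_eval poly_prod)
  qed
  thus ?thesis using poly_eq_poly_eq_iff by blast
qed

lemma order_prod_linear_factors:
  assumes "finite I"
  shows "order z (\<Prod>i\<in>I. [:- c i, 1:]) = card {i\<in>I. c i = z}"
  using assms
proof (induction I rule: finite_induct)
  case (insert j I)
  have "(\<Prod>i\<in>I. [:- c i, 1:]) \<noteq> 0" using insert(1) by (simp add: prod_zero_iff)
  hence "order z ([:- c j, 1:] * (\<Prod>i\<in>I. [:- c i, 1:]))
      = order z [:- c j, 1:] + order z (\<Prod>i\<in>I. [:- c i, 1:])"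
    by (intro order_mult no_zero_divisors) simp_all
  hence "order z (\<Prod>i\<in>insert j I. [:- c i, 1:])
      = order z [:- c j, 1:] + order z (\<Prod>i\<in>I. [:- c i, 1:])"
    by (simp only: prod.insert[OF insert(1,2)])
  also have "order z [:- c j, 1:] = (if c j = z then 1 else 0)"
    using order_power_n_n[of z 1] by (auto intro: order_0I)
  also have "{i\<in>insert j I. c i = z} = (if c j = z then insert j {i\<in>I. c i = z} else {i\<in>I. c i = z})"
    by auto
  ultimately show ?case using insert by simp
qed simp

lemma eig_count_ge_hermitian:
  fixes u :: "'k \<Rightarrow> complex^'k" and H :: "complex^'k^'k"
  assumes orthonormal: "\<And>i j. cinner (u i) (u j) = (if i = j then 1 else 0)"
    and eigen: "\<And>i. H *v u i = of_real (l i) *s u i"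
  shows "eig_count_ge H t = card {i. t \<le> l i}"
proof -
  let ?g = "\<lambda>i. complex_of_real (l i)"
  let ?A = "{i. t \<le> l i}"
  have roots: "{z. poly (\<Prod>i\<in>UNIV. [:- ?g i, 1:]) z = 0 \<and> Im z = 0 \<and> t \<le> Re z} = ?g ` ?A"
    by (auto simp: poly_prod prod_zero_iff)
  have "eig_count_ge H t = (\<Sum>z\<in>?g ` ?A. card {i. ?g i = z})"
    unfolding eig_count_ge_def charpoly_hermitian[OF orthonormal eigen] roots
    by (simp add: order_prod_linear_factors)
  also have "\<dots> = (\<Sum>z\<in>?g ` ?A. card {i\<in>?A. ?g i = z})"
    by (rule sum.cong) (auto intro!: arg_cong[where f=card])
  also have "\<dots> = card ?A"
    using sum.image_gen[of ?A "\<lambda>_. 1::nat" ?g] by simp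
  finally show ?thesis .
qed

lemma exists_plane_vector_orthogonal:
  fixes a b w :: "complex^'k"
  assumes independent: "\<And>\<alpha> \<beta>. \<alpha> *s a + \<beta> *s b = 0 \<Longrightarrow> \<alpha> = 0 \<and> \<beta> = 0"
  obtains \<alpha> \<beta> where "\<alpha> *s a + \<beta> *s b \<noteq> 0" "cinner w (\<alpha> *s a + \<beta> *s b) = 0"
proof (cases "cinner w a = 0")
  case True
  thus ?thesis using that[of 1 0] independent[of 1 0] by (simp, blast)
next
  case False
  let ?x = "cinner w b *s a + (- cinner w a) *s b"
  have "?x \<noteq> 0" using independent[of "cinner w b" "- cinner w a"] False by force
  moreover have "cinner w ?x = 0"
    by (simp only: cinner_add_right cinner_scalar_right) (simp add: mult.commute)
  ultimately show ?thesis by (rule that)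
qed

lemma cinner_adjoint_mult_self: "cinner x ((adjoint_mat M ** M) *v x) = of_real ((norm (M *v x))^2)"
  by (simp add: cinner_adjoint_right cinner_self flip: matrix_vector_mul_assoc)

text \<open>
  A plane on which \<open>\<parallel>M x\<parallel> \<le> s \<parallel>x\<parallel>\<close> contains a nonzero vector orthogonal to any single
  eigenvector of \<open>M\<^sup>* M\<close>, hence at most one eigenvalue of \<open>M\<^sup>* M\<close> exceeds \<open>s\<^sup>2\<close>.
\<close>
lemma eigenvalue_threshold_le_if_bounded_on_plane:
  fixes M :: "complex^'k^'k" and a b :: "complex^'k" and u :: "'k \<Rightarrow> complex^'k"
  assumes independent: "\<And>\<alpha> \<beta>. \<alpha> *s a + \<beta> *s b = 0 \<Longrightarrow> \<alpha> = 0 \<and> \<beta> = 0"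
    and bounded: "\<And>\<alpha> \<beta>. norm (M *v (\<alpha> *s a + \<beta> *s b)) \<le> s * norm (\<alpha> *s a + \<beta> *s b)"
    and orthonormal: "\<And>i j. cinner (u i) (u j) = (if i = j then 1 else 0)"
    and eigen: "\<And>i. (adjoint_mat M ** M) *v u i = of_real (l i) *s u i"
    and "card {i. l i < t} \<le> 1"
  shows "t \<le> s^2"
proof -
  have "\<exists>i0. {i. l i < t} \<subseteq> {i0}"
  proof (cases "{i. l i < t} = {}")
    case False
    then obtain i0 where "l i0 < t" by blast
    thus ?thesis
      using \<open>card {i. l i < t} \<le> 1\<close> card_le_Suc0_iff_eq[OF finite, of "{i. l i < t}"]
      by (intro exI[of _ i0]) auto
  qed simp
  then obtain i0 where "{i. l i < t} \<subseteq> {i0}" by blast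
  obtain \<alpha> \<beta> where x: "\<alpha> *s a + \<beta> *s b \<noteq> 0" "cinner (u i0) (\<alpha> *s a + \<beta> *s b) = 0"
    using exists_plane_vector_orthogonal[OF independent] by blast
  let ?x = "\<alpha> *s a + \<beta> *s b"
  have "l i < t \<Longrightarrow> cinner (u i) ?x = 0" for i
    using \<open>{i. l i < t} \<subseteq> {i0}\<close> x(2) by auto
  hence "t * (norm ?x)^2 \<le> Re (cinner ?x ((adjoint_mat M ** M) *v ?x))"
    by (rule rayleigh_lower_bound[OF orthonormal eigen])
  also have "\<dots> = (norm (M *v ?x))^2" by (simp add: cinner_adjoint_mult_self)
  also have "\<dots> \<le> (s * norm ?x)^2" by (intro power_mono bounded) simp
  finally show ?thesis using x(1) by (simp add: power_mult_distrib)
qed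

text \<open>
  The
  hypothesis \<open>k \<le> CARD('k)\<close> keeps the set whose supremum defines \<open>sval\<close> nonempty.
\<close>
lemma sval_le_if_bounded_on_plane:
  fixes M :: "complex^'k^'k" and a b :: "complex^'k"
  assumes independent: "\<And>\<alpha> \<beta>. \<alpha> *s a + \<beta> *s b = 0 \<Longrightarrow> \<alpha> = 0 \<and> \<beta> = 0"
    and bounded: "\<And>\<alpha> \<beta>. norm (M *v (\<alpha> *s a + \<beta> *s b)) \<le> s * norm (\<alpha> *s a + \<beta> *s b)"
    and "CARD('k) \<le> k + 1" "k \<le> CARD('k)" "0 \<le> s"
  shows "sval k M \<le> s"
proof -
  define H where "H = adjoint_mat M ** M"
  have "adjoint_mat H = H" by (simp add: H_def adjoint_mat_matrix_mult)
  then obtain u :: "'k \<Rightarrow> complex^'k" and l where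
    orthonormal: "\<And>i j. cinner (u i) (u j) = (if i = j then 1 else 0)" and
    eigen: "\<And>i. H *v u i = of_real (l i) *s u i"
    using hermitian_orthonormal_eigenbasis by blast
  have l_nonneg: "0 \<le> l i" for i
  proof -
    have "of_real (l i) = cinner (u i) (H *v u i)"
      by (simp add: eigen cinner_scalar_right orthonormal)
    also have "\<dots> = of_real ((norm (M *v u i))^2)" by (simp add: H_def cinner_adjoint_mult_self)
    finally show ?thesis by (metis of_real_eq_iff zero_le_power2)
  qed
  define T where "T = {t. 0 \<le> t \<and> k \<le> eig_count_ge H t}"
  have "0 \<in> T" using \<open>k \<le> CARD('k)\<close> l_nonneg
    by (simp add: T_def eig_count_ge_hermitian[OF orthonormal eigen])
  moreover have "t \<le> s^2" if "t \<in> T" for t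
  proof (rule eigenvalue_threshold_le_if_bounded_on_plane[OF independent bounded orthonormal])
    show "(adjoint_mat M ** M) *v u i = of_real (l i) *s u i" for i
      using eigen by (simp add: H_def)
    have "{i. l i < t} \<union> {i. t \<le> l i} = UNIV" "{i. l i < t} \<inter> {i. t \<le> l i} = {}" by auto
    hence "card {i. l i < t} + card {i. t \<le> l i} = CARD('k)"
      using card_Un_disjoint[of "{i. l i < t}" "{i. t \<le> l i}"] by simp
    with that \<open>CARD('k) \<le> k + 1\<close> show "card {i. l i < t} \<le> 1"
      by (simp add: T_def eig_count_ge_hermitian[OF orthonormal eigen])
  qed
  ultimately have "Sup T \<le> s^2" by (intro cSup_least) auto
  thus ?thesis
    using \<open>0 \<le> s\<close> real_sqrt_le_mono by (fastforce simp: sval_def T_def H_def)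
qed

definition blockvec :: "complex^'n \<Rightarrow> complex^'m \<Rightarrow> complex^('n + 'm)" where
  "blockvec p q = (\<chi> i. case i of Inl a \<Rightarrow> p $ a | Inr b \<Rightarrow> q $ b)"

lemma blockvec_Inl [simp]: "blockvec p q $ Inl a = p $ a"
  and blockvec_Inr [simp]: "blockvec p q $ Inr b = q $ b"
  by (simp_all add: blockvec_def)

lemma blockvec_cases:
  obtains p q where "x = blockvec p q"
proof
  show "x = blockvec (\<chi> a. x $ Inl a) (\<chi> b. x $ Inr b)"
    by (simp add: vec_eq_iff blockvec_def split: sum.split)
qed

lemma blockvec_eq_0_iff: "blockvec p q = 0 \<longleftrightarrow> p = 0 \<and> q = 0"
  by (auto simp: vec_eq_iff blockvec_def split: sum.split)

lemma blockvec_add: "blockvec p q + blockvec p' q' = blockvec (p + p') (q + q')"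
  by (simp add: vec_eq_iff blockvec_def split: sum.split)

lemma scalar_mult_blockvec: "c *s blockvec p q = blockvec (c *s p) (c *s q)"
  by (simp add: vec_eq_iff blockvec_def split: sum.split)

lemma sum_UNIV_Plus:
  "(\<Sum>i\<in>UNIV. f i) = (\<Sum>a\<in>UNIV. f (Inl a)) + (\<Sum>b\<in>UNIV. f (Inr b))"
  for f :: "'a::finite + 'b::finite \<Rightarrow> 'c::comm_monoid_add"
  using sum.Plus[of "UNIV :: 'a set" "UNIV :: 'b set" f] by (simp add: comp_def)

lemma norm_blockvec_power2: "(norm (blockvec p q))^2 = (norm p)^2 + (norm q)^2"
  by (simp add: norm_power2_vec sum_UNIV_Plus[of "\<lambda>i. (cmod (blockvec p q $ i))^2"])

lemma blockmat_mult_blockvec: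
  "blockmat X Y Z W *v blockvec p q = blockvec (X *v p + Y *v q) (Z *v p + W *v q)"
proof -
  have "(blockmat X Y Z W *v blockvec p q) $ i = blockvec (X *v p + Y *v q) (Z *v p + W *v q) $ i"
    for i
    by (cases i) (simp_all add: matrix_vector_mult_def blockmat_def sum_UNIV_Plus)
  thus ?thesis by (simp add: vec_eq_iff)
qed

lemma mpeval_mult_vec: "mpeval R m z *v x = (\<Sum>j\<le>m. z^j *s (R j *v x))"
  by (simp add: vec_eq_iff matrix_vector_mult_def mpeval_def sum_distrib_left sum_distrib_right
      mult_ac sum.swap[of _ "{..m}"])

lemma mpdiv_mult_vec:
  "mpdiv R m z1 z2 *v x = (\<Sum>j\<le>m. ((z1^j - z2^j) / (z1 - z2)) *s (R j *v x))"
  by (simp add: vec_eq_iff matrix_vector_mult_def mpdiv_def mpeval_def sum_distrib_left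
      sum_distrib_right mult_ac sum.swap[of _ "{..m}"] diff_divide_distrib sum_divide_distrib
      left_diff_distrib right_diff_distrib sum_subtractf)

lemma mpdiv_mult_vec_eq_divided_difference:
  "mpdiv R m z1 z2 *v x = (1 / (z1 - z2)) *s (mpeval R m z1 *v x - mpeval R m z2 *v x)"
  by (simp add: vec_eq_iff matrix_vector_mult_def mpdiv_def sum_distrib_left sum_subtractf
      diff_divide_distrib left_diff_distrib right_diff_distrib mult_ac)

lemma Fmat_mult_blockvec:
  "Fmat R m z1 z2 \<gamma> *v blockvec p q
    = blockvec (mpeval R m z1 *v p) (\<gamma> *s (mpdiv R m z1 z2 *v p) + mpeval R m z2 *v q)"
proof -
  have "(\<chi> i k. \<gamma> * (mpdiv R m z1 z2 $ i $ k)) *v p = \<gamma> *s (mpdiv R m z1 z2 *v p)"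
    by (simp add: vec_eq_iff matrix_vector_mult_def sum_distrib_left mult_ac)
  thus ?thesis by (simp add: Fmat_def blockmat_mult_blockvec)
qed

lemma Fmat_add_mult_vec:
  "Fmat (\<lambda>j. A j + D j) m z1 z2 \<gamma> *v x = Fmat A m z1 z2 \<gamma> *v x + Fmat D m z1 z2 \<gamma> *v x"
proof -
  obtain p q where x: "x = blockvec p q" by (rule blockvec_cases)
  show ?thesis
    by (simp add: x Fmat_mult_blockvec blockvec_add mpeval_mult_vec mpdiv_mult_vec
        matrix_vector_mult_add_rdistrib vector_add_ldistrib sum.distrib algebra_simps)
qed

section \<open>Bounding \<open>F[\<Delta>(\<mu>\<^sub>1,\<mu>\<^sub>2);\<gamma>]\<close> by the weight matrix\<close>

lemma norm_weighted_sum_le: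
  assumes "\<forall>j\<le>m. specnorm (D j) \<le> \<epsilon> * \<omega> j" "\<forall>j\<le>m. 0 \<le> \<omega> j" "0 \<le> \<epsilon>"
  shows "norm (\<Sum>j\<le>m. c j *s (D j *v x)) \<le> \<epsilon> * (\<Sum>j\<le>m. \<omega> j * cmod (c j)) * norm x"
proof -
  have "norm (\<Sum>j\<le>m. c j *s (D j *v x)) \<le> (\<Sum>j\<le>m. cmod (c j) * norm (D j *v x))"
    by (rule order_trans[OF norm_sum]) (simp add: norm_scalar_mult_vec)
  also have "\<dots> \<le> (\<Sum>j\<le>m. cmod (c j) * (\<epsilon> * \<omega> j * norm x))"
  proof (rule sum_mono)
    fix j assume "j \<in> {..m}"
    hence "specnorm (D j) * norm x \<le> \<epsilon> * \<omega> j * norm x"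
      using assms(1) by (simp add: mult_right_mono)
    thus "cmod (c j) * norm (D j *v x) \<le> cmod (c j) * (\<epsilon> * \<omega> j * norm x)"
      using specnorm_bound[of "D j" x] by (intro mult_left_mono) auto
  qed
  also have "\<dots> = \<epsilon> * (\<Sum>j\<le>m. \<omega> j * cmod (c j)) * norm x"
    by (simp add: sum_distrib_left sum_distrib_right mult_ac)
  finally show ?thesis .
qed

lemma wmat_mult_vec:
  "(wmat \<omega> m z1 z2 \<gamma> *v y) $ 1 = of_real (\<Sum>j\<le>m. \<omega> j * cmod z1 ^ j) * y $ 1"
  "(wmat \<omega> m z1 z2 \<gamma> *v y) $ 2
     = \<gamma> * of_real (\<Sum>j\<le>m. \<omega> j * cmod (z1 ^ j - z2 ^ j) / cmod (z1 - z2)) * y $ 1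
       + of_real (\<Sum>j\<le>m. \<omega> j * cmod z2 ^ j) * y $ 2"
  by (simp_all add: matrix_vector_mult_def sum_2 wmat_def Let_def)

lemma specnorm_wmat_pos:
  assumes "\<forall>j\<le>m. 0 \<le> \<omega> j" "0 < \<omega> 0"
  shows "0 < specnorm (wmat \<omega> m z1 z2 \<gamma>)"
proof -
  let ?W = "wmat \<omega> m z1 z2 \<gamma>" and ?e1 = "axis 1 1 :: complex^2"
  define a where "a = (\<Sum>j\<le>m. \<omega> j * cmod z1 ^ j)"
  have "\<omega> 0 \<le> a"
    using member_le_sum[of 0 "{..m}" "\<lambda>j. \<omega> j * cmod z1 ^ j"] assms(1) by (simp add: a_def)
  have "(?W *v ?e1) $ 1 = of_real a"
    by (simp add: wmat_mult_vec a_def axis_def)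
  hence "a \<le> norm (?W *v ?e1)"
    using \<open>\<omega> 0 \<le> a\<close> assms(2) Finite_Cartesian_Product.norm_nth_le[of "?W *v ?e1" 1] by simp
  also have "\<dots> \<le> specnorm ?W"
    using specnorm_bound[of ?W ?e1] by (simp add: norm_vec_def L2_set_def axis_def sum_2)
  finally show ?thesis using \<open>\<omega> 0 \<le> a\<close> assms(2) by linarith
qed

lemma specnorm_Fmat_le_wmat:
  fixes D :: "nat \<Rightarrow> complex^'n^'n"
  assumes "\<forall>j\<le>m. 0 \<le> \<omega> j" "0 \<le> \<epsilon>" "\<forall>j\<le>m. specnorm (D j) \<le> \<epsilon> * \<omega> j"
  shows "specnorm (Fmat D m z1 z2 \<gamma>) \<le> \<epsilon> * specnorm (wmat \<omega> m z1 z2 \<gamma>)"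
proof (rule specnorm_le)
  fix x :: "complex^('n + 'n)"
  obtain p q where x: "x = blockvec p q" by (rule blockvec_cases)
  let ?W = "wmat \<omega> m z1 z2 \<gamma>"
  define a where "a = (\<Sum>j\<le>m. \<omega> j * cmod z1 ^ j)"
  define c where "c = (\<Sum>j\<le>m. \<omega> j * cmod (z1 ^ j - z2 ^ j) / cmod (z1 - z2))"
  define d where "d = (\<Sum>j\<le>m. \<omega> j * cmod z2 ^ j)"
  define b where "b = cmod \<gamma> * c * norm p + d * norm q"
  obtain \<zeta> where \<zeta>: "cmod \<zeta> = 1" "\<gamma> = \<zeta> * of_real (cmod \<gamma>)"
  proof (cases "\<gamma> = 0")
    case True
    thus ?thesis by (intro that[of 1]) simp_all
  next
    case False
    thus ?thesis
      by (intro that[of "sgn \<gamma>"]) (simp add: norm_sgn, simp add: sgn_div_norm scaleR_conv_of_real)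
  qed
  have upper: "norm (mpeval D m z1 *v p) \<le> \<epsilon> * (a * norm p)"
    using norm_weighted_sum_le[OF assms(3,1,2), of "\<lambda>j. z1 ^ j" p]
    by (simp add: mpeval_mult_vec a_def norm_power mult_ac)
  have "norm (\<gamma> *s (mpdiv D m z1 z2 *v p) + mpeval D m z2 *v q)
      \<le> cmod \<gamma> * norm (mpdiv D m z1 z2 *v p) + norm (mpeval D m z2 *v q)"
    by (metis norm_triangle_ineq norm_scalar_mult_vec)
  also have "\<dots> \<le> cmod \<gamma> * (\<epsilon> * c * norm p) + \<epsilon> * d * norm q"
    using norm_weighted_sum_le[OF assms(3,1,2), of "\<lambda>j. (z1 ^ j - z2 ^ j) / (z1 - z2)" p]
      norm_weighted_sum_le[OF assms(3,1,2), of "\<lambda>j. z2 ^ j" q]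
    by (intro add_mono mult_left_mono)
      (simp_all add: mpeval_mult_vec mpdiv_mult_vec c_def d_def norm_divide norm_power)
  finally have lower: "norm (\<gamma> *s (mpdiv D m z1 z2 *v p) + mpeval D m z2 *v q) \<le> \<epsilon> * b"
    by (simp add: b_def algebra_simps)
  define y :: "complex^2" where "y = (\<chi> i. if i = 1 then of_real (norm p) else \<zeta> * of_real (norm q))"
  have "(?W *v y) $ 1 = of_real (a * norm p)"
    by (simp only: wmat_mult_vec(1)[of \<omega> m z1 z2 \<gamma> y, folded a_def]) (simp add: y_def)
  moreover have "(?W *v y) $ 2
      = \<gamma> * of_real c * of_real (norm p) + of_real d * (\<zeta> * of_real (norm q))"
    by (simp only: wmat_mult_vec(2)[of \<omega> m z1 z2 \<gamma> y, folded c_def d_def]) (simp add: y_def)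
  hence "(?W *v y) $ 2 = \<zeta> * of_real b"
    by (subst (asm) (1) \<zeta>(2)) (simp add: b_def algebra_simps)
  ultimately have Wy: "(norm (?W *v y))^2 = (a * norm p)^2 + b^2"
    using \<zeta>(1) by (simp add: norm_power2_vec sum_2 norm_mult power_mult_distrib)
  have "(norm y)^2 = (norm x)^2"
    unfolding norm_power2_vec[of y] using \<zeta>(1)
    by (simp add: x norm_blockvec_power2 sum_2 y_def norm_mult)
  hence "norm y = norm x" by (simp add: power2_eq_iff_nonneg)
  have "(norm (Fmat D m z1 z2 \<gamma> *v x))^2
      = (norm (mpeval D m z1 *v p))^2 + (norm (\<gamma> *s (mpdiv D m z1 z2 *v p) + mpeval D m z2 *v q))^2"
    by (simp add: x Fmat_mult_blockvec norm_blockvec_power2)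
  also have "\<dots> \<le> (\<epsilon> * (a * norm p))^2 + (\<epsilon> * b)^2"
    using upper lower by (intro add_mono power_mono) auto
  also have "\<dots> = \<epsilon>^2 * (norm (?W *v y))^2"
    by (simp add: Wy power_mult_distrib algebra_simps)
  also have "\<dots> \<le> \<epsilon>^2 * (specnorm ?W * norm x)^2"
    using specnorm_bound[of ?W y] \<open>norm y = norm x\<close> by (intro mult_left_mono power_mono) auto
  finally have "(norm (Fmat D m z1 z2 \<gamma> *v x))^2 \<le> (\<epsilon> * specnorm ?W * norm x)^2"
    by (simp add: power_mult_distrib)
  moreover have "0 \<le> \<epsilon> * specnorm ?W * norm x"
    using \<open>0 \<le> \<epsilon>\<close> specnorm_nonneg[of ?W] by simp
  ultimately show "norm (Fmat D m z1 z2 \<gamma> *v x) \<le> \<epsilon> * specnorm ?W * norm x"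
    by (rule power2_le_imp_le)
qed

section \<open>Kernel vectors and the second smallest singular value\<close>

lemma Fmat_vanishes_on_kernel_plane:
  assumes "z1 \<noteq> z2" "mpeval R m z1 *v u = 0" "mpeval R m z2 *v v = 0"
  shows "Fmat R m z1 z2 \<gamma> *v (\<alpha> *s blockvec 0 v + \<beta> *s blockvec u ((\<gamma> / (z1 - z2)) *s u)) = 0"
proof -
  have "\<gamma> *s ((1 / (z1 - z2)) *s (0 - \<beta> *s (mpeval R m z2 *v u)))
      + (\<beta> * (\<gamma> / (z1 - z2))) *s (mpeval R m z2 *v u) = 0"
    by (simp add: vector_smult_assoc vec_eq_iff field_simps)
  thus ?thesis
    using assms(2,3)
    by (simp add: scalar_mult_blockvec blockvec_add Fmat_mult_blockvec blockvec_eq_0_iff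
        mpdiv_mult_vec_eq_divided_difference vector_scalar_commute matrix_vector_right_distrib
        vector_smult_assoc)
qed

lemma sval_Fmat_le_specnorm:
  fixes A D :: "nat \<Rightarrow> complex^'n^'n"
  assumes "z1 \<noteq> z2"
    and "det (mpeval (\<lambda>j. A j + D j) m z1) = 0" "det (mpeval (\<lambda>j. A j + D j) m z2) = 0"
  shows "sval (2 * CARD('n) - 1) (Fmat A m z1 z2 \<gamma>) \<le> specnorm (Fmat D m z1 z2 \<gamma>)"
proof -
  obtain u where u: "u \<noteq> 0" "mpeval (\<lambda>j. A j + D j) m z1 *v u = 0"
    using kernel_nonzero_if_det_eq_0[OF assms(2)] .
  obtain v where v: "v \<noteq> 0" "mpeval (\<lambda>j. A j + D j) m z2 *v v = 0"
    using kernel_nonzero_if_det_eq_0[OF assms(3)] .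
  let ?a = "blockvec 0 v" and ?b = "blockvec u ((\<gamma> / (z1 - z2)) *s u)"
  show ?thesis
  proof (rule sval_le_if_bounded_on_plane[where a = ?a and b = ?b])
    fix \<alpha> \<beta> :: complex
    assume "\<alpha> *s ?a + \<beta> *s ?b = 0"
    hence "\<beta> *s u = 0" "\<alpha> *s v + \<beta> *s ((\<gamma> / (z1 - z2)) *s u) = 0"
      by (simp_all add: scalar_mult_blockvec blockvec_add blockvec_eq_0_iff)
    thus "\<alpha> = 0 \<and> \<beta> = 0"
      using u(1) v(1) by (simp add: scalar_mult_vec_eq_0_iff)
  next
    fix \<alpha> \<beta> :: complex
    let ?x = "\<alpha> *s ?a + \<beta> *s ?b"
    have "Fmat A m z1 z2 \<gamma> *v ?x = - (Fmat D m z1 z2 \<gamma> *v ?x)"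
      using Fmat_vanishes_on_kernel_plane[OF assms(1) u(2) v(2)] Fmat_add_mult_vec[of A D]
      by (simp add: eq_neg_iff_add_eq_0)
    thus "norm (Fmat A m z1 z2 \<gamma> *v ?x) \<le> specnorm (Fmat D m z1 z2 \<gamma>) * norm ?x"
      using specnorm_bound by simp
  qed (simp_all add: specnorm_nonneg)
qed

theorem lemma6:
  fixes A D :: "nat \<Rightarrow> complex^'n^'n" and m :: nat
    and \<mu>1 \<mu>2 \<gamma> :: complex and \<epsilon> :: real and \<omega> :: "nat \<Rightarrow> real"
  assumes "\<mu>1 \<noteq> \<mu>2" and "\<epsilon> > 0"
    and "\<forall>j\<le>m. \<omega> j \<ge> 0" and "\<omega> 0 > 0"
    and "\<forall>j\<le>m. specnorm (D j) \<le> \<epsilon> * \<omega> j"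
    and "det (mpeval (\<lambda>j. A j + D j) m \<mu>1) = 0"
    and "det (mpeval (\<lambda>j. A j + D j) m \<mu>2) = 0"
    and "\<gamma> \<noteq> 0"
  shows "\<epsilon> \<ge> specnorm (Fmat D m \<mu>1 \<mu>2 \<gamma>) / specnorm (wmat \<omega> m \<mu>1 \<mu>2 \<gamma>)
       \<and> specnorm (Fmat D m \<mu>1 \<mu>2 \<gamma>) / specnorm (wmat \<omega> m \<mu>1 \<mu>2 \<gamma>)
           \<ge> sval (2 * CARD('n) - 1) (Fmat A m \<mu>1 \<mu>2 \<gamma>) / specnorm (wmat \<omega> m \<mu>1 \<mu>2 \<gamma>)"
proof -
  have "0 < specnorm (wmat \<omega> m \<mu>1 \<mu>2 \<gamma>)"
    using assms(3,4) by (rule specnorm_wmat_pos)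
  moreover have "specnorm (Fmat D m \<mu>1 \<mu>2 \<gamma>) \<le> \<epsilon> * specnorm (wmat \<omega> m \<mu>1 \<mu>2 \<gamma>)"
    using assms(2,3,5) by (intro specnorm_Fmat_le_wmat) auto
  moreover have "sval (2 * CARD('n) - 1) (Fmat A m \<mu>1 \<mu>2 \<gamma>) \<le> specnorm (Fmat D m \<mu>1 \<mu>2 \<gamma>)"
    using assms(1,6,7) by (rule sval_Fmat_le_specnorm)
  ultimately show ?thesis
    by (simp add: pos_divide_le_eq divide_right_mono)
qed

end
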